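(* Let $\alpha$ and $\beta$ be elements of order 3 in the symmetric group $S_6$ that do not belong to the same Sylow 3-subgroup. Then $\alpha\beta$ or $\alpha\beta^2$ is not an element of order 3. *)

theory Defs
  imports "HOL-Algebra.Sym_Groups" "HOL-Algebra.Multiplicative_Group"
    "HOL-Computational_Algebra.Primes"
begin

definition sylow_subgroup :: "nat \<Rightarrow> ('a, 'b) monoid_scheme \<Rightarrow> 'a set \<Rightarrow> bool" where
  "sylow_subgroup p G H \<longleftrightarrow> subgroup H G \<and> card H = p ^ multiplicity p (order G)"

end

theory Submission
  imports Defs "HOL-Combinatorics.Multiset_Permutations"
begin

text \<open>
  Every element of order 3 in \<open>S\<^sub>6\<close> is conjugate to \<open>c = (1 2 3)\<close> or to
  \<open>c = (1 2 3)(4 5 6)\<close>, and both lie in the Sylow 3-subgroup \<open>P = \<langle>(1 2 3), (4 5 6)\<rangle>\<close>.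
  Conjugating \<open>\<alpha>\<close> to such a \<open>c\<close> and \<open>\<beta>\<close> to \<open>\<beta>'\<close> along with it preserves the orders of
  \<open>\<alpha>\<beta>\<close> and \<open>\<alpha>\<beta>\<^sup>2\<close>, and a finite check over the 80 elements of order 3 shows that
  \<open>c\<beta>'\<close> and \<open>c\<beta>'\<^sup>2\<close> can only both have order 3 when \<open>\<beta>' \<in> P\<close>. Then \<open>\<alpha>\<close> and \<open>\<beta>\<close> lie
  in a conjugate of \<open>P\<close>, which is again a Sylow 3-subgroup.
\<close>

lemma (in group) ord_eq_prime_iff:
  assumes "prime p" and "x \<in> carrier G"
  shows "ord x = p \<longleftrightarrow> x [^] p = \<one> \<and> x \<noteq> \<one>"
proof
  assume "ord x = p"
  then show "x [^] p = \<one> \<and> x \<noteq> \<one>"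
    using assms by (auto simp: ord_eq_1)
next
  assume "x [^] p = \<one> \<and> x \<noteq> \<one>"
  then have "ord x dvd p" and "ord x \<noteq> 1"
    using assms(2) pow_eq_id ord_eq_1 by blast+
  then show "ord x = p"
    using assms(1) by (auto simp: prime_nat_iff)
qed

lemma (in group) conjugate_mult:
  assumes "g \<in> carrier G" and "x \<in> carrier G" and "y \<in> carrier G"
  shows "(g \<otimes> x \<otimes> inv g) \<otimes> (g \<otimes> y \<otimes> inv g) = g \<otimes> (x \<otimes> y) \<otimes> inv g"
  using assms by (simp add: m_assoc flip: m_assoc[of "inv g" g])

lemma (in group) conjugate_nat_pow:
  assumes "g \<in> carrier G" and "x \<in> carrier G"
  shows "(g \<otimes> x \<otimes> inv g) [^] (n::nat) = g \<otimes> x [^] n \<otimes> inv g"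
proof (induction n)
  case 0
  then show ?case using assms by simp
next
  case (Suc n)
  then show ?case using assms by (simp add: conjugate_mult)
qed

lemma (in group) ord_conjugate:
  assumes "g \<in> carrier G" and "x \<in> carrier G"
  shows "ord (g \<otimes> x \<otimes> inv g) = ord x"
proof -
  have "(g \<otimes> x \<otimes> inv g) [^] n = \<one> \<longleftrightarrow> x [^] n = \<one>" for n :: nat
    using assms by (auto simp: conjugate_nat_pow inv_solve_right')
  then show ?thesis
    using assms by (simp add: ord_unique pow_eq_id)
qed

lemma (in group) subgroup_of_finite_closed:
  assumes "finite (carrier G)" and "H \<subseteq> carrier G" and "H \<noteq> {}"
    and closed: "\<And>x y. x \<in> H \<Longrightarrow> y \<in> H \<Longrightarrow> x \<otimes> y \<in> H"
  shows "subgroup H G"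
proof (rule subgroupI)
  fix x
  assume "x \<in> H"
  then have x: "x \<in> carrier G"
    using assms(2) by blast
  have pow_Suc_closed: "x [^] Suc n \<in> H" for n
    using \<open>x \<in> H\<close> x by (induction n) (auto intro: closed)
  obtain k where k: "ord x = Suc k"
    using ord_ge_1[OF assms(1) x] by (metis Suc_le_D One_nat_def)
  then have "\<one> \<in> H"
    using pow_Suc_closed[of k] x by (metis pow_ord_eq_1)
  then have pow_closed: "x [^] (n::nat) \<in> H" for n
    using pow_Suc_closed by (cases n) simp_all
  have "x [^] k \<otimes> x = \<one>"
    using k pow_ord_eq_1[OF x] nat_pow_Suc by metis
  then have "inv x = x [^] k"
    using x by (intro inv_equality) simp_all
  then show "inv x \<in> H"
    using pow_closed by simp
qed (use assms in auto)

lemma (in group) conjugation_group_hom: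
  assumes "g \<in> carrier G"
  shows "group_hom G G (\<lambda>x. g \<otimes> x \<otimes> inv g)"
proof -
  have "(\<lambda>x. g \<otimes> x \<otimes> inv g) \<in> hom G G"
    using assms by (intro homI) (simp_all add: conjugate_mult)
  then show ?thesis
    by (simp add: group_hom_def group_hom_axioms_def is_group)
qed

lemma (in group) sylow_subgroup_conjugate:
  assumes "sylow_subgroup p G H" and "g \<in> carrier G"
  shows "sylow_subgroup p G ((\<lambda>x. g \<otimes> x \<otimes> inv g) ` H)"
proof -
  have H: "subgroup H G" and card: "card H = p ^ multiplicity p (order G)"
    using assms(1) by (simp_all add: sylow_subgroup_def)
  have "inj_on (\<lambda>x. g \<otimes> x \<otimes> inv g) H"
    using assms(2) subgroup.subset[OF H] by (intro inj_onI) (auto simp: subset_iff)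
  then have "card ((\<lambda>x. g \<otimes> x \<otimes> inv g) ` H) = card H"
    by (rule card_image)
  then show ?thesis
    using card group_hom.subgroup_img_is_subgroup[OF conjugation_group_hom[OF assms(2)] H]
    by (simp add: sylow_subgroup_def)
qed

section \<open>Permutations of \<open>{1..n}\<close> as lists of values\<close>

text \<open>This encoding makes the finite checks in \<open>S\<^sub>6\<close> below executable.\<close>

definition perm_list :: "nat \<Rightarrow> (nat \<Rightarrow> nat) \<Rightarrow> nat list" where
  "perm_list n f = map f [1..<Suc n]"

definition list_comp :: "nat list \<Rightarrow> nat list \<Rightarrow> nat list" where
  "list_comp xs ys = map (\<lambda>i. xs ! (i - 1)) ys"

lemma permutations_of_set_iff:
  assumes "finite A"
  shows "xs \<in> permutations_of_set A \<longleftrightarrow> distinct xs \<and> length xs = card A \<and> set xs \<subseteq> A"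
proof
  assume "xs \<in> permutations_of_set A"
  then show "distinct xs \<and> length xs = card A \<and> set xs \<subseteq> A"
    by (auto simp: permutations_of_set_def distinct_card)
next
  assume "distinct xs \<and> length xs = card A \<and> set xs \<subseteq> A"
  then show "xs \<in> permutations_of_set A"
    using assms by (auto simp: permutations_of_set_def distinct_card card_subset_eq)
qed

lemma permutations_of_set_atLeastAtMost:
  "permutations_of_set {1..n} = set (permutations_of_set_list [1..<Suc n])"
  using permutations_of_list[of "[1..<Suc n]"]
  by (simp del: upt_Suc add: atLeastLessThanSuc_atLeastAtMost distinct_remdups_id)

lemma perm_list_comp:
  assumes "g permutes {1..n}"
  shows "perm_list n (f \<circ> g) = list_comp (perm_list n f) (perm_list n g)"
proof -
  have "perm_list n f ! (g i - 1) = f (g i)" if "i \<in> {1..n}" for i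
  proof -
    have "g i \<in> {1..n}"
      using permutes_in_image[OF assms] that by blast
    then have "g i - 1 < n" and "1 + (g i - 1) = g i"
      by auto
    then show ?thesis
      by (simp add: perm_list_def del: upt_Suc)
  qed
  then show ?thesis
    by (auto simp: perm_list_def list_comp_def)
qed

lemma perm_list_eq_iff:
  assumes "f permutes {1..n}" and "g permutes {1..n}"
  shows "perm_list n f = perm_list n g \<longleftrightarrow> f = g"
proof
  assume "perm_list n f = perm_list n g"
  then have "\<forall>i \<in> {1..n}. f i = g i"
    by (simp add: perm_list_def atLeastLessThanSuc_atLeastAtMost del: upt_Suc)
  then have "f i = g i" for i
    using permutes_not_in[OF assms(1)] permutes_not_in[OF assms(2)]
    by (cases "i \<in> {1..n}") simp_all
  then show "f = g" ..
qed simp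

lemma perm_list_in_permutations_of_set:
  assumes "f permutes {1..n}"
  shows "perm_list n f \<in> permutations_of_set {1..n}"
proof -
  have "inj_on f {1..n}"
    using permutes_inj_on[OF assms] .
  then show ?thesis
    using permutes_image[OF assms]
    by (simp add: perm_list_def permutations_of_set_def distinct_map
        atLeastLessThanSuc_atLeastAtMost del: upt_Suc)
qed

lemma perm_list_surj:
  assumes "xs \<in> permutations_of_set {1..n}"
  obtains f where "f permutes {1..n}" and "perm_list n f = xs"
proof
  let ?ps = "zip [1..<Suc n] xs"
  have set_xs: "set xs = {1..n}" and "distinct xs"
    using assms by (simp_all add: permutations_of_set_def)
  then have len: "length xs = n"
    by (metis distinct_card card_atLeastAtMost diff_Suc_1)
  then have "map fst ?ps = [1..<Suc n]" and "map snd ?ps = xs"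
    by simp_all
  then have "list_permutes ?ps {1..n}"
    using set_xs by (intro list_permutesI) (simp_all add: atLeastLessThanSuc_atLeastAtMost del: upt_Suc)
  then show "permutation_of_list ?ps permutes {1..n}"
    by (rule permutation_of_list_permutes)
  have "permutation_of_list ?ps i = xs ! (i - 1)" if "i \<in> {1..n}" for i
  proof -
    have "[1..<Suc n] ! (i - 1) = i" and "i - 1 < n"
      using that by (auto simp del: upt_Suc)
    then show ?thesis
      using map_of_zip_nth[of "[1..<Suc n]" xs "i - 1"] len
      by (simp add: permutation_of_list_def del: upt_Suc)
  qed
  then show "perm_list n (permutation_of_list ?ps) = xs"
    using len by (intro nth_equalityI) (simp_all add: perm_list_def del: upt_Suc)
qed

definition order_3_list :: "nat \<Rightarrow> nat list \<Rightarrow> bool" where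
  "order_3_list n xs \<longleftrightarrow> list_comp xs (list_comp xs xs) = [1..<Suc n] \<and> xs \<noteq> [1..<Suc n]"

lemma sym_group_ord_eq_3_iff:
  assumes "f \<in> carrier (sym_group n)"
  shows "group.ord (sym_group n) f = 3 \<longleftrightarrow> order_3_list n (perm_list n f)"
proof -
  interpret group "sym_group n"
    by (rule sym_group_is_group)
  have f: "f permutes {1..n}" and fff: "f \<circ> (f \<circ> f) permutes {1..n}"
    using assms by (simp_all add: sym_group_carrier permutes_compose)
  have "f [^]\<^bsub>sym_group n\<^esub> (3::nat) = f \<circ> (f \<circ> f)"
    by (simp add: numeral_3_eq_3 sym_group_mult sym_group_one comp_assoc)
  then have "group.ord (sym_group n) f = 3 \<longleftrightarrow> f \<circ> (f \<circ> f) = id \<and> f \<noteq> id"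
    using ord_eq_prime_iff[of 3 f] assms by (simp add: sym_group_one)
  also have "\<dots> \<longleftrightarrow> perm_list n (f \<circ> (f \<circ> f)) = perm_list n id \<and> perm_list n f \<noteq> perm_list n id"
    using perm_list_eq_iff fff f permutes_id by metis
  also have "\<dots> \<longleftrightarrow> order_3_list n (perm_list n f)"
    using f by (simp add: order_3_list_def perm_list_comp permutes_compose)
      (simp add: perm_list_def)
  finally show ?thesis .
qed

section \<open>Elements of order 3 in \<open>S\<^sub>6\<close>\<close>

definition cycle_123 :: "nat list" where
  "cycle_123 = [2,3,1,4,5,6]"

definition cycle_456 :: "nat list" where
  "cycle_456 = [1,2,3,5,6,4]"

definition cycle_123_456 :: "nat list" where
  "cycle_123_456 = list_comp cycle_123 cycle_456"

definition sylow_123_456_list :: "nat list list" where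
  "sylow_123_456_list =
     [list_comp x y. x \<leftarrow> [[1..<7], cycle_123, list_comp cycle_123 cycle_123],
                     y \<leftarrow> [[1..<7], cycle_456, list_comp cycle_456 cycle_456]]"

lemma sylow_123_456_list_closed:
  assumes "x \<in> set sylow_123_456_list" and "y \<in> set sylow_123_456_list"
  shows "list_comp x y \<in> set sylow_123_456_list"
proof -
  have "\<forall>x \<in> set sylow_123_456_list. \<forall>y \<in> set sylow_123_456_list.
      list_comp x y \<in> set sylow_123_456_list"
    by code_simp
  then show ?thesis
    using assms by blast
qed

lemma sylow_123_456_list_subset: "set sylow_123_456_list \<subseteq> permutations_of_set {1..6}"
proof -
  have "\<forall>x \<in> set sylow_123_456_list. distinct x \<and> length x = 6 \<and> set x \<subseteq> {1..6}"
    by code_simp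
  then show ?thesis
    by (auto simp: permutations_of_set_iff)
qed

lemma card_sylow_123_456_list: "card (set sylow_123_456_list) = 9"
proof -
  have "distinct sylow_123_456_list" and "length sylow_123_456_list = 9"
    by code_simp+
  then show ?thesis
    by (simp add: distinct_card)
qed

lemma sylow_123_456_list_members:
  "[1..<7] \<in> set sylow_123_456_list" "cycle_123 \<in> set sylow_123_456_list"
  "cycle_123_456 \<in> set sylow_123_456_list"
  by code_simp+

text \<open>
  \<open>cycle_conjugator a\<close> lists the cycle of the least point moved by \<open>a\<close>, followed by either
  the second 3-cycle of \<open>a\<close> or its three fixed points; conjugation by it turns an element of
  order 3 into \<open>cycle_123\<close> or \<open>cycle_123_456\<close>.
\<close>

definition cycle_conjugator :: "nat list \<Rightarrow> nat list" where
  "cycle_conjugator a =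
     (let orbit = (\<lambda>i. [i, a ! (i - 1), a ! (a ! (i - 1) - 1)]);
          x = hd [i \<leftarrow> [1..<7]. a ! (i - 1) \<noteq> i];
          rest = [i \<leftarrow> [1..<7]. i \<notin> set (orbit x)];
          y = hd rest
      in orbit x @ (if a ! (y - 1) = y then rest else orbit y))"

text \<open>
  In the two exhaustive checks below the guards are written with \<open>if\<close> rather than \<open>\<longrightarrow>\<close>,
  so that \<open>code_simp\<close> evaluates the conclusion only for the 80 lists of order 3.
\<close>

lemma order_3_list_conjugate_canonical:
  assumes "a \<in> permutations_of_set {1..6}" and "order_3_list 6 a"
  obtains t c where "t \<in> permutations_of_set {1..6}" and "c \<in> {cycle_123, cycle_123_456}"
    and "list_comp a t = list_comp t c"
proof -
  have "list_all (\<lambda>a. if order_3_list 6 a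
      then (let t = cycle_conjugator a in distinct t \<and> length t = 6 \<and> set t \<subseteq> {1..6}
        \<and> (list_comp a t = list_comp t cycle_123 \<or> list_comp a t = list_comp t cycle_123_456))
      else True) (permutations_of_set_list [1..<7])"
    by code_simp
  moreover have "a \<in> set (permutations_of_set_list [1..<7])"
    using assms(1) permutations_of_set_atLeastAtMost[of 6] by simp
  ultimately have "let t = cycle_conjugator a in distinct t \<and> length t = 6 \<and> set t \<subseteq> {1..6}
      \<and> (list_comp a t = list_comp t cycle_123 \<or> list_comp a t = list_comp t cycle_123_456)"
    using assms(2) unfolding list_all_iff by fastforce
  then show ?thesis
    using that[of "cycle_conjugator a"] by (auto simp: Let_def permutations_of_set_iff)
qed

lemma order_3_pair_canonical_list:
  assumes "c \<in> {cycle_123, cycle_123_456}" and "b \<in> permutations_of_set {1..6}"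
    and "order_3_list 6 b" and "order_3_list 6 (list_comp c b)"
    and "order_3_list 6 (list_comp c (list_comp b b))"
  shows "b \<in> set sylow_123_456_list"
proof -
  have "list_all (\<lambda>b. if order_3_list 6 b
      then (\<forall>c \<in> {cycle_123, cycle_123_456}.
        if order_3_list 6 (list_comp c b) \<and> order_3_list 6 (list_comp c (list_comp b b))
        then b \<in> set sylow_123_456_list else True)
      else True) (permutations_of_set_list [1..<7])"
    by code_simp
  moreover have "b \<in> set (permutations_of_set_list [1..<7])"
    using assms(2) permutations_of_set_atLeastAtMost[of 6] by simp
  ultimately show ?thesis
    using assms(1,3-5) by (auto simp: list_all_iff)
qed

definition sylow_123_456 :: "(nat \<Rightarrow> nat) set" where
  "sylow_123_456 = {f. f permutes {1..6} \<and> perm_list 6 f \<in> set sylow_123_456_list}"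

lemma order_sym_group_6: "order (sym_group 6) = 720"
  by (simp add: order_def sym_group_card_carrier fact_numeral)

lemma sylow_subgroup_sym_group_6_iff:
  "sylow_subgroup 3 (sym_group 6) H \<longleftrightarrow> subgroup H (sym_group 6) \<and> card H = 9"
proof -
  have "multiplicity 3 (720::nat) = 2"
    by (rule multiplicity_eqI) simp_all
  then show ?thesis
    by (simp add: sylow_subgroup_def order_sym_group_6)
qed

lemma sylow_subgroup_sylow_123_456: "sylow_subgroup 3 (sym_group 6) sylow_123_456"
proof -
  interpret group "sym_group 6"
    by (rule sym_group_is_group)
  have "subgroup sylow_123_456 (sym_group 6)"
  proof (rule subgroup_of_finite_closed)
    show "finite (carrier (sym_group 6))"
      by (simp add: sym_group_def finite_permutations)
    show "sylow_123_456 \<subseteq> carrier (sym_group 6)"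
      by (auto simp: sylow_123_456_def sym_group_carrier)
    have "perm_list 6 id = [1..<7]"
      by (simp add: perm_list_def del: upt_Suc)
    then have "id \<in> sylow_123_456"
      using sylow_123_456_list_members(1) by (simp add: sylow_123_456_def permutes_id)
    then show "sylow_123_456 \<noteq> {}"
      by blast
  next
    fix f g
    assume "f \<in> sylow_123_456" and "g \<in> sylow_123_456"
    then show "f \<otimes>\<^bsub>sym_group 6\<^esub> g \<in> sylow_123_456"
      by (auto simp: sylow_123_456_def sym_group_mult perm_list_comp permutes_compose
          intro: sylow_123_456_list_closed)
  qed
  moreover have "card sylow_123_456 = 9"
  proof -
    have "inj_on (perm_list 6) sylow_123_456"
      by (auto intro: inj_onI simp: sylow_123_456_def perm_list_eq_iff)
    moreover have "perm_list 6 ` sylow_123_456 = set sylow_123_456_list"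
    proof
      show "set sylow_123_456_list \<subseteq> perm_list 6 ` sylow_123_456"
      proof
        fix xs
        assume xs: "xs \<in> set sylow_123_456_list"
        then obtain f where "f permutes {1..6}" and "perm_list 6 f = xs"
          using sylow_123_456_list_subset perm_list_surj by blast
        then show "xs \<in> perm_list 6 ` sylow_123_456"
          using xs by (auto simp: sylow_123_456_def)
      qed
    qed (auto simp: sylow_123_456_def)
    ultimately show ?thesis
      using card_sylow_123_456_list by (metis card_image)
  qed
  ultimately show ?thesis
    by (simp add: sylow_subgroup_sym_group_6_iff)
qed

lemma order_3_conjugate_canonical:
  assumes "\<alpha> \<in> carrier (sym_group 6)" and "group.ord (sym_group 6) \<alpha> = 3"
  obtains \<tau> c where "\<tau> \<in> carrier (sym_group 6)" and "c \<in> carrier (sym_group 6)"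
    and "perm_list 6 c \<in> {cycle_123, cycle_123_456}"
    and "\<alpha> = \<tau> \<otimes>\<^bsub>sym_group 6\<^esub> c \<otimes>\<^bsub>sym_group 6\<^esub> inv\<^bsub>sym_group 6\<^esub> \<tau>"
proof -
  have \<alpha>: "\<alpha> permutes {1..6}"
    using assms(1) by (simp add: sym_group_carrier)
  then have "perm_list 6 \<alpha> \<in> permutations_of_set {1..6}"
    by (rule perm_list_in_permutations_of_set)
  moreover have "order_3_list 6 (perm_list 6 \<alpha>)"
    using assms sym_group_ord_eq_3_iff by blast
  ultimately obtain t cl where t: "t \<in> permutations_of_set {1..6}"
    and cl: "cl \<in> {cycle_123, cycle_123_456}" and conj: "list_comp (perm_list 6 \<alpha>) t = list_comp t cl"
    by (rule order_3_list_conjugate_canonical)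
  obtain \<tau> where \<tau>: "\<tau> permutes {1..6}" and "perm_list 6 \<tau> = t"
    using perm_list_surj[OF t] .
  moreover have "cl \<in> permutations_of_set {1..6}"
    using cl sylow_123_456_list_members(2,3) sylow_123_456_list_subset by blast
  then obtain c where c: "c permutes {1..6}" and "perm_list 6 c = cl"
    by (rule perm_list_surj)
  ultimately have "perm_list 6 (\<alpha> \<circ> \<tau>) = perm_list 6 (\<tau> \<circ> c)"
    using conj by (simp add: perm_list_comp)
  then have "\<alpha> \<circ> \<tau> = \<tau> \<circ> c"
    using \<alpha> \<tau> c by (simp add: perm_list_eq_iff permutes_compose)
  then have "\<alpha> = \<tau> \<circ> c \<circ> inv' \<tau>"
    using permutes_inv_o(1)[OF \<tau>] by (metis comp_assoc comp_id)
  then show ?thesis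
    using that \<tau> c \<open>perm_list 6 c = cl\<close> cl
    by (simp add: sym_group_carrier sym_group_mult)
qed

lemma canonical_order_3_pair_in_sylow_123_456:
  assumes "c \<in> carrier (sym_group 6)" and "perm_list 6 c \<in> {cycle_123, cycle_123_456}"
    and "\<beta> \<in> carrier (sym_group 6)" and "group.ord (sym_group 6) \<beta> = 3"
    and "group.ord (sym_group 6) (c \<otimes>\<^bsub>sym_group 6\<^esub> \<beta>) = 3"
    and "group.ord (sym_group 6) (c \<otimes>\<^bsub>sym_group 6\<^esub> \<beta> [^]\<^bsub>sym_group 6\<^esub> (2::nat)) = 3"
  shows "\<beta> \<in> sylow_123_456"
proof -
  have c: "c permutes {1..6}" and \<beta>: "\<beta> permutes {1..6}"
    using assms(1,3) by (simp_all add: sym_group_carrier)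
  have "\<beta> [^]\<^bsub>sym_group 6\<^esub> (2::nat) = \<beta> \<circ> \<beta>"
    by (simp add: numeral_2_eq_2 sym_group_mult sym_group_one)
  moreover have "c \<circ> \<beta> \<in> carrier (sym_group 6)" and "c \<circ> (\<beta> \<circ> \<beta>) \<in> carrier (sym_group 6)"
    using c \<beta> by (simp_all add: sym_group_carrier permutes_compose)
  ultimately have "order_3_list 6 (perm_list 6 \<beta>)"
    and "order_3_list 6 (perm_list 6 (c \<circ> \<beta>))"
    and "order_3_list 6 (perm_list 6 (c \<circ> (\<beta> \<circ> \<beta>)))"
    using assms(3-6) sym_group_ord_eq_3_iff by (simp_all add: sym_group_mult)
  then have "order_3_list 6 (perm_list 6 \<beta>)"
    and "order_3_list 6 (list_comp (perm_list 6 c) (perm_list 6 \<beta>))"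
    and "order_3_list 6 (list_comp (perm_list 6 c) (list_comp (perm_list 6 \<beta>) (perm_list 6 \<beta>)))"
    by (simp_all only: perm_list_comp[OF \<beta>] perm_list_comp[OF permutes_compose[OF \<beta> \<beta>]])
  then show ?thesis
    using order_3_pair_canonical_list[OF assms(2) perm_list_in_permutations_of_set[OF \<beta>]] \<beta>
    by (simp add: sylow_123_456_def)
qed

lemma sym_group_6_order_3_pair_in_common_sylow:
  fixes G (structure)
  defines "G \<equiv> sym_group 6"
  assumes \<alpha>: "\<alpha> \<in> carrier G" and \<beta>: "\<beta> \<in> carrier G"
    and ord_\<alpha>: "group.ord G \<alpha> = 3" and ord_\<beta>: "group.ord G \<beta> = 3"
    and ord_\<alpha>\<beta>: "group.ord G (\<alpha> \<otimes> \<beta>) = 3"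
    and ord_\<alpha>\<beta>2: "group.ord G (\<alpha> \<otimes> \<beta> [^] (2::nat)) = 3"
  shows "\<exists>H. sylow_subgroup 3 G H \<and> \<alpha> \<in> H \<and> \<beta> \<in> H"
proof -
  interpret group G
    unfolding G_def by (rule sym_group_is_group)
  obtain \<tau> c where \<tau>: "\<tau> \<in> carrier G" and c: "c \<in> carrier G"
    and c_canonical: "perm_list 6 c \<in> {cycle_123, cycle_123_456}" and \<alpha>_eq: "\<alpha> = \<tau> \<otimes> c \<otimes> inv \<tau>"
    using order_3_conjugate_canonical \<alpha> ord_\<alpha> unfolding G_def by blast
  define \<beta>' where "\<beta>' = inv \<tau> \<otimes> \<beta> \<otimes> \<tau>"
  have \<beta>': "\<beta>' \<in> carrier G" and \<beta>_eq: "\<beta> = \<tau> \<otimes> \<beta>' \<otimes> inv \<tau>"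
    using \<tau> \<beta> by (simp_all add: \<beta>'_def m_assoc flip: m_assoc[of \<tau> "inv \<tau>"])
  have "ord \<beta>' = 3" and "ord (c \<otimes> \<beta>') = 3" and "ord (c \<otimes> \<beta>' [^] (2::nat)) = 3"
    using ord_\<beta> ord_\<alpha>\<beta> ord_\<alpha>\<beta>2 \<tau> c \<beta>'
    by (simp_all add: \<alpha>_eq \<beta>_eq ord_conjugate conjugate_mult conjugate_nat_pow)
  then have "\<beta>' \<in> sylow_123_456"
    using canonical_order_3_pair_in_sylow_123_456 c c_canonical \<beta>' unfolding G_def by blast
  moreover have "c \<in> sylow_123_456"
    using c c_canonical sylow_123_456_list_members(2,3)
    by (auto simp: sylow_123_456_def G_def sym_group_carrier)
  ultimately show ?thesis
    using sylow_subgroup_conjugate[OF sylow_subgroup_sylow_123_456[folded G_def] \<tau>] \<alpha>_eq \<beta>_eq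
    by blast
qed

theorem lemma4:
  fixes \<alpha> \<beta> :: "nat \<Rightarrow> nat"
  assumes "\<alpha> \<in> carrier (sym_group 6)" and "\<beta> \<in> carrier (sym_group 6)"
    and "group.ord (sym_group 6) \<alpha> = 3" and "group.ord (sym_group 6) \<beta> = 3"
    and "\<not> (\<exists>H. sylow_subgroup 3 (sym_group 6) H \<and> \<alpha> \<in> H \<and> \<beta> \<in> H)"
  shows "group.ord (sym_group 6) (\<alpha> \<otimes>\<^bsub>sym_group 6\<^esub> \<beta>) \<noteq> 3
       \<or> group.ord (sym_group 6) (\<alpha> \<otimes>\<^bsub>sym_group 6\<^esub> (\<beta> [^]\<^bsub>sym_group 6\<^esub> (2::nat))) \<noteq> 3"
  using sym_group_6_order_3_pair_in_common_sylow[OF assms(1-4)] assms(5) by blast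

end
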